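(* Let $M$ be a compact Riemannian manifold with distance $d$, $r\ge2$, $N$ a metric space and $\mathcal{G}:N\to\mathfrak{X}^r(M)$ a continuous family of vector fields $G_s=\mathcal{G}(s)$, with an open set $U$ which is a trapping region for each $G_s$, and attracting sets $\Lambda_s=\bigcap_{t>0}\overline{\phi^{G_s}_t(U)}$. Suppose the family is robustly expansive on these attracting sets: for every $\epsilon>0$ there is $\delta>0$ such that for all $s\in N$, $x,y\in\Lambda_s$ and $h\in S(\mathbb{R})$, if $d(\phi^{G_s}_t(x),\phi^{G_s}_{h(t)}(y))\le\delta$ for all $t\in\mathbb{R}$, then $\phi^{G_s}_{h(t_0)}(y)\in\phi^{G_s}_{[t_0-\epsilon,t_0+\epsilon]}(x)$ for some $t_0\in\mathbb{R}$. Then there exists $\delta>0$ which is a constant of $h$-expansiveness for each flow $\phi^{G_s}_t$ restricted to $\Lambda_s$, $s\in N$; that is, for every $s\in N$, $h_{loc}(f_s,\delta)=0$, where $f_s=\phi^{G_s}_1|_{\Lambda_s}$.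
   Context: $S(\mathbb{R})$ is the set of surjective increasing continuous functions $\mathbb{R}\to\mathbb{R}$. For a flow $\phi_t$ on a compact invariant set $\Lambda$ and $f=\phi_1$: dynamical balls are $B_t(x,\epsilon)=\{y\in\Lambda: d(\phi_ux,\phi_uy)<\epsilon,\ -t<u<t\}$ and $B^+(x,\epsilon)=\bigcap_{n\ge1}B_n(x,\epsilon)$. A set $F$ $(n,\delta)$-spans $E$ if $E\subset\bigcup_{y\in F}B_n(y,\delta)$; $r_n(E,\delta)$ is the minimal cardinality of an $(n,\delta)$-spanning set of $E$; for compact $K$, $h(f,K)=\lim_{\delta\to0}\limsup_{n\to\infty}\frac1n\log r_n(K,\delta)$; and $h_{loc}(f,\delta)=\sup_{x\in\Lambda}h(f,B^+(x,\delta))$. The flow is entropy expansive ($h$-expansive) with constant $\delta$ if $h_{loc}(f,\delta)=0$. *)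

theory Defs
  imports "HOL-Analysis.Analysis" "HOL-Library.Extended_Real"
begin

text \<open>Abstract setting: a flow \<phi> :: real \<Rightarrow> 'a \<Rightarrow> 'a on a metric space, with a
compact invariant set \<Lambda>. Time-1 map f = \<phi> 1 restricted to \<Lambda>.\<close>

definition S_R :: "(real \<Rightarrow> real) set" where
  "S_R = {h. surj h \<and> strict_mono h \<and> continuous_on UNIV h}"

definition dyn_ball :: "(real \<Rightarrow> 'a::metric_space \<Rightarrow> 'a) \<Rightarrow> 'a set \<Rightarrow> real \<Rightarrow> 'a \<Rightarrow> real \<Rightarrow> 'a set" where
  "dyn_ball \<phi> \<Lambda> t x \<epsilon> = {y \<in> \<Lambda>. \<forall>u. -t < u \<and> u < t \<longrightarrow> dist (\<phi> u x) (\<phi> u y) < \<epsilon>}"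

definition dyn_ball_plus :: "(real \<Rightarrow> 'a::metric_space \<Rightarrow> 'a) \<Rightarrow> 'a set \<Rightarrow> 'a \<Rightarrow> real \<Rightarrow> 'a set" where
  "dyn_ball_plus \<phi> \<Lambda> x \<epsilon> = (\<Inter>n\<in>{1::nat..}. dyn_ball \<phi> \<Lambda> (real n) x \<epsilon>)"

definition spans :: "(real \<Rightarrow> 'a::metric_space \<Rightarrow> 'a) \<Rightarrow> 'a set \<Rightarrow> nat \<Rightarrow> real \<Rightarrow> 'a set \<Rightarrow> 'a set \<Rightarrow> bool" where
  "spans \<phi> \<Lambda> n \<delta> F E \<longleftrightarrow> F \<subseteq> \<Lambda> \<and> E \<subseteq> (\<Union>y\<in>F. dyn_ball \<phi> \<Lambda> (real n) y \<delta>)"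

definition span_num :: "(real \<Rightarrow> 'a::metric_space \<Rightarrow> 'a) \<Rightarrow> 'a set \<Rightarrow> nat \<Rightarrow> 'a set \<Rightarrow> real \<Rightarrow> nat" where
  "span_num \<phi> \<Lambda> n E \<delta> = (LEAST k. \<exists>F. finite F \<and> card F = k \<and> spans \<phi> \<Lambda> n \<delta> F E)"

definition entropy_set :: "(real \<Rightarrow> 'a::metric_space \<Rightarrow> 'a) \<Rightarrow> 'a set \<Rightarrow> 'a set \<Rightarrow> ereal" where
  "entropy_set \<phi> \<Lambda> K =
     Lim (at_right (0::real))
       (\<lambda>\<delta>. limsup (\<lambda>n::nat. ereal (ln (real (span_num \<phi> \<Lambda> n K \<delta>)) / real n)))"

definition h_loc :: "(real \<Rightarrow> 'a::metric_space \<Rightarrow> 'a) \<Rightarrow> 'a set \<Rightarrow> real \<Rightarrow> ereal" where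
  "h_loc \<phi> \<Lambda> \<delta> = (SUP x\<in>\<Lambda>. entropy_set \<phi> \<Lambda> (dyn_ball_plus \<phi> \<Lambda> x \<delta>))"

definition continuous_flow_family :: "'b::metric_space set \<Rightarrow> 'a::metric_space set \<Rightarrow> ('b \<Rightarrow> real \<Rightarrow> 'a \<Rightarrow> 'a) \<Rightarrow> bool" where
  "continuous_flow_family N M \<phi> \<longleftrightarrow>
     (\<forall>s\<in>N. \<forall>x\<in>M. \<phi> s 0 x = x) \<and>
     (\<forall>s\<in>N. \<forall>t u. \<forall>x\<in>M. \<phi> s (t + u) x = \<phi> s t (\<phi> s u x)) \<and>
     (\<forall>s\<in>N. \<forall>t. \<forall>x\<in>M. \<phi> s t x \<in> M) \<and>
     continuous_on (N \<times> UNIV \<times> M) (\<lambda>(s, t, x). \<phi> s t x)"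

definition trapping_region :: "'a::metric_space set \<Rightarrow> (real \<Rightarrow> 'a \<Rightarrow> 'a) \<Rightarrow> 'a set \<Rightarrow> bool" where
  "trapping_region M \<phi> U \<longleftrightarrow> openin (top_of_set M) U \<and> (\<forall>t>0. closure (\<phi> t ` U) \<subseteq> U)"

definition attracting_set :: "(real \<Rightarrow> 'a::metric_space \<Rightarrow> 'a) \<Rightarrow> 'a set \<Rightarrow> 'a set" where
  "attracting_set \<phi> U = (\<Inter>t\<in>{0<..}. closure (\<phi> t ` U))"

end

theory Submission
  imports Defs
begin

text \<open>Robust expansiveness with \<open>\<epsilon> = 1\<close> yields one \<open>\<delta>\<close> for all parameters. If \<open>y\<close> stays
  \<open>\<delta>\<close>-close to \<open>x\<close> for all times, expansiveness with the reparametrisation \<open>h = id\<close> puts \<open>y\<close>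
  on the orbit segment \<open>\<phi>\<^sub>[\<^sub>-\<^sub>1\<^sub>,\<^sub>1\<^sub>] x\<close>; so every \<open>B\<^sup>+(x, \<delta>)\<close> lies in such a segment. Since the
  flow commutes with itself, finitely many points of a short orbit segment, chosen by uniform
  continuity of \<open>(t, w) \<mapsto> \<phi>\<^sub>t w\<close>, \<open>(n, d)\<close>-span it for every \<open>n\<close> simultaneously; bounded
  spanning numbers mean zero entropy. Compactness makes the attracting sets nonempty, so the
  supremum defining \<open>h\<^sub>l\<^sub>o\<^sub>c\<close> is \<open>0\<close> rather than \<open>-\<infinity>\<close>.\<close>

lemma dyn_ball_plus_subset: "dyn_ball_plus \<phi> \<Lambda> x \<delta> \<subseteq> \<Lambda>"
  unfolding dyn_ball_plus_def dyn_ball_def by auto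

lemma dyn_ball_plus_dist_less:
  assumes "y \<in> dyn_ball_plus \<phi> \<Lambda> x \<delta>"
  shows "dist (\<phi> t x) (\<phi> t y) < \<delta>"
proof -
  define n where "n = nat \<lceil>\<bar>t\<bar>\<rceil> + 1"
  have "y \<in> dyn_ball \<phi> \<Lambda> (real n) x \<delta>"
    using INT_D[OF assms[unfolded dyn_ball_plus_def], of n] by (simp add: n_def)
  moreover have "- real n < t" "t < real n"
    unfolding n_def by linarith+
  ultimately show ?thesis
    unfolding dyn_ball_def by blast
qed

lemma span_num_le_card: "finite F \<Longrightarrow> spans \<phi> \<Lambda> n \<delta> F E \<Longrightarrow> span_num \<phi> \<Lambda> n E \<delta> \<le> card F"
  unfolding span_num_def by (rule Least_le) blast

lemma limsup_ln_div_eq_0_if_bounded: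
  fixes a :: "nat \<Rightarrow> nat"
  assumes bound: "\<And>n. a n \<le> C"
  shows "limsup (\<lambda>n. ereal (ln (real (a n)) / real n)) = 0"
proof -
  \<comment> \<open>\<open>ln 0 = 0\<close> in Isabelle, so the lower bound also holds where \<open>a n = 0\<close>.\<close>
  have "ln (real (a n)) \<in> {0 .. ln (real C + 1)}" for n
    using bound[of n] by (cases "a n = 0") auto
  then have "(\<lambda>n. ln (real (a n)) / real n) \<longlonglongrightarrow> 0"
    by (intro tendsto_sandwich[OF _ _ tendsto_const lim_const_over_n[of "ln (real C + 1)"]]
        always_eventually allI) (auto intro: divide_right_mono)
  then have "(\<lambda>n. ereal (ln (real (a n)) / real n)) \<longlonglongrightarrow> ereal 0"
    by (rule tendsto_ereal)
  then show ?thesis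
    by (simp add: lim_imp_Limsup zero_ereal_def)
qed

lemma entropy_set_eq_0_if_span_num_bounded:
  assumes "\<And>d. d > 0 \<Longrightarrow> \<exists>C. \<forall>n. span_num \<phi> \<Lambda> n K d \<le> C"
  shows "entropy_set \<phi> \<Lambda> K = 0"
proof -
  have "\<forall>\<^sub>F d in at_right 0. limsup (\<lambda>n. ereal (ln (real (span_num \<phi> \<Lambda> n K d)) / real n)) = 0"
    unfolding eventually_at_right_field
    using assms limsup_ln_div_eq_0_if_bounded by (intro exI[of _ 1]) fastforce
  then have "((\<lambda>d. limsup (\<lambda>n. ereal (ln (real (span_num \<phi> \<Lambda> n K d)) / real n))) \<longlongrightarrow> 0)
      (at_right (0::real))"
    by (rule tendsto_eventually)
  then show ?thesis
    unfolding entropy_set_def by (intro tendsto_Lim) (simp_all add: trivial_limit_at_right_real)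
qed

lemma h_loc_eq_0_if_entropy_eq_0:
  assumes "\<Lambda> \<noteq> {}" "\<And>x. x \<in> \<Lambda> \<Longrightarrow> entropy_set \<phi> \<Lambda> (dyn_ball_plus \<phi> \<Lambda> x \<delta>) = 0"
  shows "h_loc \<phi> \<Lambda> \<delta> = 0"
  using assms unfolding h_loc_def by simp

locale flow =
  fixes M :: "'a::metric_space set" and \<phi> :: "real \<Rightarrow> 'a \<Rightarrow> 'a"
  assumes flow_zero: "x \<in> M \<Longrightarrow> \<phi> 0 x = x"
    and flow_add: "x \<in> M \<Longrightarrow> \<phi> (t + u) x = \<phi> t (\<phi> u x)"
    and flow_in: "x \<in> M \<Longrightarrow> \<phi> t x \<in> M"

lemma continuous_flow_family_flow:
  assumes "continuous_flow_family N M \<phi>" "s \<in> N"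
  shows "flow M (\<phi> s)"
  using assms unfolding continuous_flow_family_def by unfold_locales auto

lemma continuous_flow_family_uniformly_continuous:
  assumes "continuous_flow_family N M \<phi>" "s \<in> N" "compact J" "compact M"
  shows "uniformly_continuous_on (J \<times> M) (\<lambda>(t, x). \<phi> s t x)"
proof -
  have cont: "continuous_on (N \<times> UNIV \<times> M) (\<lambda>(s, t, x). \<phi> s t x)"
    using assms(1) unfolding continuous_flow_family_def by blast
  have "continuous_on (J \<times> M) (\<lambda>p. (s, fst p, snd p))"
    by (intro continuous_intros)
  moreover have "(\<lambda>p. (s, fst p, snd p)) ` (J \<times> M) \<subseteq> N \<times> UNIV \<times> M"
    using assms(2) by auto
  ultimately have "continuous_on (J \<times> M) (\<lambda>p. (\<lambda>(s, t, x). \<phi> s t x) (s, fst p, snd p))"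
    by (rule continuous_on_compose2[OF cont])
  then show ?thesis
    using assms(3,4) by (simp add: case_prod_beta compact_uniformly_continuous compact_Times)
qed

context flow
begin

lemma flow_commute: "x \<in> M \<Longrightarrow> \<phi> t (\<phi> u x) = \<phi> u (\<phi> t x)"
  using flow_add[of x t u] flow_add[of x u t] by (simp add: add.commute)

lemma flow_inverse: "x \<in> M \<Longrightarrow> \<phi> (- t) (\<phi> t x) = x"
  using flow_add[of x "- t" t] flow_zero[of x] by simp

lemma trapping_region_subset: "trapping_region M \<phi> U \<Longrightarrow> U \<subseteq> M"
  unfolding trapping_region_def by (auto dest: openin_imp_subset)

lemma trapping_region_forward_invariant:
  assumes "trapping_region M \<phi> U" "0 \<le> t"
  shows "\<phi> t ` U \<subseteq> U"
proof (cases "t = 0")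
  case True
  then show ?thesis
    using trapping_region_subset[OF assms(1)] flow_zero by auto
next
  case False
  then have "closure (\<phi> t ` U) \<subseteq> U"
    using assms unfolding trapping_region_def by auto
  then show ?thesis
    using closure_subset by blast
qed

lemma trapping_region_image_antimono:
  assumes "trapping_region M \<phi> U" "0 \<le> t" "t \<le> t'"
  shows "\<phi> t' ` U \<subseteq> \<phi> t ` U"
proof
  fix y assume "y \<in> \<phi> t' ` U"
  then obtain u where u: "u \<in> U" "y = \<phi> t' u" by blast
  have "\<phi> (t' - t) u \<in> U"
    using trapping_region_forward_invariant[OF assms(1), of "t' - t"] assms(3) u(1) by auto
  moreover have "y = \<phi> t (\<phi> (t' - t) u)"
    using u flow_add[of u t "t' - t"] trapping_region_subset[OF assms(1)] by auto
  ultimately show "y \<in> \<phi> t ` U" by blast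
qed

lemma closure_image_subset:
  assumes "closed M" "U \<subseteq> M"
  shows "closure (\<phi> t ` U) \<subseteq> M"
  using assms flow_in by (intro closure_minimal) blast+

lemma attracting_set_subset:
  assumes "closed M" "trapping_region M \<phi> U"
  shows "attracting_set \<phi> U \<subseteq> M"
  using closure_image_subset[OF assms(1) trapping_region_subset[OF assms(2)], of 1]
  unfolding attracting_set_def by (meson greaterThan_iff INT_lower subset_trans zero_less_one)

lemma attracting_set_nonempty:
  assumes "compact M" "trapping_region M \<phi> U" "U \<noteq> {}"
  shows "attracting_set \<phi> U \<noteq> {}"
proof -
  have UM: "U \<subseteq> M"
    using trapping_region_subset[OF assms(2)] .
  have "M \<inter> (\<Inter>t\<in>{0<..}. closure (\<phi> t ` U)) \<noteq> {}"
  proof (rule compact_imp_fip_image[OF assms(1)])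
    fix T :: "real set" assume T: "finite T" "T \<subseteq> {0<..}"
    show "M \<inter> (\<Inter>t\<in>T. closure (\<phi> t ` U)) \<noteq> {}"
    proof (cases "T = {}")
      case True
      then show ?thesis using UM assms(3) by auto
    next
      case False
      have "closure (\<phi> (Max T) ` U) \<subseteq> closure (\<phi> t ` U)" if "t \<in> T" for t
      proof -
        have "0 \<le> t" "t \<le> Max T"
          using that T by auto
        then show ?thesis
          using trapping_region_image_antimono[OF assms(2)] by (simp add: closure_mono)
      qed
      moreover have "closure (\<phi> (Max T) ` U) \<subseteq> M"
        using closure_image_subset[OF compact_imp_closed[OF assms(1)] UM] .
      ultimately have "closure (\<phi> (Max T) ` U) \<subseteq> M \<inter> (\<Inter>t\<in>T. closure (\<phi> t ` U))"
        by (intro Int_greatest INT_greatest)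
      moreover have "closure (\<phi> (Max T) ` U) \<noteq> {}"
        using assms(3) by (simp add: closure_eq_empty)
      ultimately show ?thesis
        by (metis subset_empty)
    qed
  qed (rule closed_closure)
  then show ?thesis
    unfolding attracting_set_def by (metis inf_bot_right)
qed

lemma dyn_ball_plus_subset_orbit_segment:
  assumes expansive: "\<And>y. y \<in> \<Lambda> \<Longrightarrow> (\<forall>t. dist (\<phi> t x) (\<phi> t y) \<le> \<delta>) \<Longrightarrow>
      \<exists>t0. \<phi> t0 y \<in> (\<lambda>u. \<phi> u x) ` {t0 - \<epsilon> .. t0 + \<epsilon>}"
    and "\<Lambda> \<subseteq> M" "x \<in> M"
  shows "dyn_ball_plus \<phi> \<Lambda> x \<delta> \<subseteq> (\<lambda>u. \<phi> u x) ` {-\<epsilon> .. \<epsilon>}"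
proof
  fix y assume y: "y \<in> dyn_ball_plus \<phi> \<Lambda> x \<delta>"
  then have "y \<in> \<Lambda>"
    using dyn_ball_plus_subset by blast
  then have yM: "y \<in> M"
    using assms(2) by blast
  have "dist (\<phi> t x) (\<phi> t y) \<le> \<delta>" for t
    using dyn_ball_plus_dist_less[OF y] by (rule less_imp_le)
  then obtain t0 u where u: "u \<in> {t0 - \<epsilon> .. t0 + \<epsilon>}" "\<phi> t0 y = \<phi> u x"
    using expansive[OF \<open>y \<in> \<Lambda>\<close>] by blast
  have "y = \<phi> (- t0) (\<phi> t0 y)"
    using flow_inverse[OF yM] by simp
  also have "\<dots> = \<phi> (u - t0) x"
    using u(2) flow_add[OF assms(3), of "- t0" u] by simp
  finally show "y \<in> (\<lambda>u. \<phi> u x) ` {-\<epsilon> .. \<epsilon>}"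
    using u(1) by auto
qed

lemma span_num_orbit_segment_bounded:
  assumes "bounded J" "uniformly_continuous_on (J \<times> M) (\<lambda>(t, w). \<phi> t w)"
    and "x \<in> M" "K \<subseteq> \<Lambda>" "K \<subseteq> (\<lambda>t. \<phi> t x) ` J" "d > 0"
  shows "\<exists>C. \<forall>n. span_num \<phi> \<Lambda> n K d \<le> C"
proof -
  obtain \<eta> where "\<eta> > 0" and \<eta>: "\<forall>p\<in>J \<times> M. \<forall>p'\<in>J \<times> M. dist p' p < \<eta> \<longrightarrow>
      dist ((\<lambda>(t, w). \<phi> t w) p') ((\<lambda>(t, w). \<phi> t w) p) < d"
    using assms(2,6) unfolding uniformly_continuous_on_def by blast
  define A where "A = {t \<in> J. \<phi> t x \<in> K}"
  have compact: "compact (closure A)"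
    using assms(1) unfolding A_def by (simp add: bounded_subset compact_closure)
  have cover: "closure A \<subseteq> (\<Union>a\<in>A. ball a \<eta>)"
  proof
    fix z assume "z \<in> closure A"
    then obtain a where "a \<in> A" "dist a z < \<eta>"
      using \<open>\<eta> > 0\<close> unfolding closure_approachable by blast
    then show "z \<in> (\<Union>a\<in>A. ball a \<eta>)" by auto
  qed
  obtain A' where A': "A' \<subseteq> A" "finite A'" "closure A \<subseteq> (\<Union>a\<in>A'. ball a \<eta>)"
    using compactE_image[OF compact, of A "\<lambda>a. ball a \<eta>"] cover by auto
  have close: "dist (\<phi> u (\<phi> a x)) (\<phi> u (\<phi> b x)) < d"
    if "a \<in> J" "b \<in> J" "dist a b < \<eta>" for a b u
  proof -
    have "dist (a, \<phi> u x) (b, \<phi> u x) < \<eta>"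
      using that(3) by (simp add: dist_Pair_Pair)
    then have "dist (\<phi> a (\<phi> u x)) (\<phi> b (\<phi> u x)) < d"
      using \<eta>[rule_format, of "(b, \<phi> u x)" "(a, \<phi> u x)"] that(1,2) flow_in[OF assms(3)] by simp
    then show ?thesis
      using flow_commute[OF assms(3)] by simp
  qed
  have "spans \<phi> \<Lambda> n d ((\<lambda>a. \<phi> a x) ` A') K" for n
    unfolding spans_def
  proof
    show "(\<lambda>a. \<phi> a x) ` A' \<subseteq> \<Lambda>"
      using A'(1) assms(4) unfolding A_def by auto
    show "K \<subseteq> (\<Union>y\<in>(\<lambda>a. \<phi> a x) ` A'. dyn_ball \<phi> \<Lambda> (real n) y d)"
    proof
      fix z assume "z \<in> K"
      then obtain b where b: "b \<in> A" "z = \<phi> b x"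
        using assms(5) unfolding A_def by auto
      have "b \<in> (\<Union>a\<in>A'. ball a \<eta>)"
        using b(1) A'(3) closure_subset by blast
      then obtain a where a: "a \<in> A'" "dist a b < \<eta>"
        by auto
      have "a \<in> J" "b \<in> J"
        using A'(1) b(1) a(1) unfolding A_def by auto
      then have "z \<in> dyn_ball \<phi> \<Lambda> (real n) (\<phi> a x) d"
        using close[OF _ _ a(2)] b(2) \<open>z \<in> K\<close> assms(4) unfolding dyn_ball_def by auto
      then show "z \<in> (\<Union>y\<in>(\<lambda>a. \<phi> a x) ` A'. dyn_ball \<phi> \<Lambda> (real n) y d)"
        using a(1) by blast
    qed
  qed
  then show ?thesis
    using span_num_le_card A'(2) by (meson finite_imageI)
qed

lemma entropy_set_orbit_segment_eq_0:
  assumes "bounded J" "uniformly_continuous_on (J \<times> M) (\<lambda>(t, w). \<phi> t w)"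
    and "x \<in> M" "K \<subseteq> \<Lambda>" "K \<subseteq> (\<lambda>t. \<phi> t x) ` J"
  shows "entropy_set \<phi> \<Lambda> K = 0"
  using span_num_orbit_segment_bounded[OF assms] by (rule entropy_set_eq_0_if_span_num_bounded)

lemma h_loc_attracting_set_eq_0:
  assumes "compact M" "trapping_region M \<phi> U" "U \<noteq> {}"
    and "uniformly_continuous_on ({-\<epsilon>..\<epsilon>} \<times> M) (\<lambda>(t, w). \<phi> t w)"
    and expansive: "\<And>x y. x \<in> attracting_set \<phi> U \<Longrightarrow> y \<in> attracting_set \<phi> U \<Longrightarrow>
      (\<forall>t. dist (\<phi> t x) (\<phi> t y) \<le> \<delta>) \<Longrightarrow> \<exists>t0. \<phi> t0 y \<in> (\<lambda>u. \<phi> u x) ` {t0 - \<epsilon> .. t0 + \<epsilon>}"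
  shows "h_loc \<phi> (attracting_set \<phi> U) \<delta> = 0"
proof (rule h_loc_eq_0_if_entropy_eq_0)
  show "attracting_set \<phi> U \<noteq> {}"
    using attracting_set_nonempty[OF assms(1-3)] .
  have \<Lambda>M: "attracting_set \<phi> U \<subseteq> M"
    using attracting_set_subset[OF compact_imp_closed[OF assms(1)] assms(2)] .
  fix x assume x: "x \<in> attracting_set \<phi> U"
  show "entropy_set \<phi> (attracting_set \<phi> U) (dyn_ball_plus \<phi> (attracting_set \<phi> U) x \<delta>) = 0"
  proof (rule entropy_set_orbit_segment_eq_0)
    show "dyn_ball_plus \<phi> (attracting_set \<phi> U) x \<delta> \<subseteq> (\<lambda>t. \<phi> t x) ` {-\<epsilon>..\<epsilon>}"
      using expansive[OF x] x \<Lambda>M by (intro dyn_ball_plus_subset_orbit_segment) auto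
    show "dyn_ball_plus \<phi> (attracting_set \<phi> U) x \<delta> \<subseteq> attracting_set \<phi> U"
      by (rule dyn_ball_plus_subset)
  qed (use x \<Lambda>M assms(4) in auto)
qed

end

theorem proposition3p3:
  fixes M :: "'a::metric_space set" and N :: "'b::metric_space set"
    and \<phi> :: "'b \<Rightarrow> real \<Rightarrow> 'a \<Rightarrow> 'a" and U :: "'a set"
  assumes "compact M"
    and "continuous_flow_family N M \<phi>"
    and "U \<noteq> {}"
    and "\<forall>s\<in>N. trapping_region M (\<phi> s) U"
    and robust_exp: "\<forall>\<epsilon>>0. \<exists>\<delta>>0. \<forall>s\<in>N.
           \<forall>x\<in>attracting_set (\<phi> s) U. \<forall>y\<in>attracting_set (\<phi> s) U. \<forall>h\<in>S_R.
             (\<forall>t. dist (\<phi> s t x) (\<phi> s (h t) y) \<le> \<delta>) \<longrightarrow>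
             (\<exists>t0. \<phi> s (h t0) y \<in> (\<lambda>u. \<phi> s u x) ` {t0 - \<epsilon> .. t0 + \<epsilon>})"
  shows "\<exists>\<delta>>0. \<forall>s\<in>N. h_loc (\<phi> s) (attracting_set (\<phi> s) U) \<delta> = 0"
proof -
  obtain \<delta> where "\<delta> > 0" and \<delta>: "\<forall>s\<in>N.
           \<forall>x\<in>attracting_set (\<phi> s) U. \<forall>y\<in>attracting_set (\<phi> s) U. \<forall>h\<in>S_R.
             (\<forall>t. dist (\<phi> s t x) (\<phi> s (h t) y) \<le> \<delta>) \<longrightarrow>
             (\<exists>t0. \<phi> s (h t0) y \<in> (\<lambda>u. \<phi> s u x) ` {t0 - 1 .. t0 + 1})"
    using robust_exp zero_less_one by blast
  have "id \<in> S_R"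
    unfolding S_R_def by (simp add: strict_mono_def)
  have "h_loc (\<phi> s) (attracting_set (\<phi> s) U) \<delta> = 0" if "s \<in> N" for s
  proof -
    interpret flow M "\<phi> s"
      using continuous_flow_family_flow[OF assms(2) that] .
    show ?thesis
    proof (rule h_loc_attracting_set_eq_0)
      show "trapping_region M (\<phi> s) U"
        using assms(4) that by blast
      show "uniformly_continuous_on ({-1..1} \<times> M) (\<lambda>(t, w). \<phi> s t w)"
        using continuous_flow_family_uniformly_continuous assms(1,2) that by blast
      show "\<exists>t0. \<phi> s t0 y \<in> (\<lambda>u. \<phi> s u x) ` {t0 - 1 .. t0 + 1}"
        if "x \<in> attracting_set (\<phi> s) U" "y \<in> attracting_set (\<phi> s) U"
          "\<forall>t. dist (\<phi> s t x) (\<phi> s t y) \<le> \<delta>" for x y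
        using \<delta>[rule_format, OF \<open>s \<in> N\<close> that(1,2) \<open>id \<in> S_R\<close>] that(3) by simp
    qed (use assms(1,3) in auto)
  qed
  then show ?thesis
    using \<open>\<delta> > 0\<close> by blast
qed

end
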